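(* Let $N \geq \Delta \geq 2$ be integers. If $F$ is an acyclic graph with no isolated vertices, with $e(F)=N$, $\Delta(F)=\Delta$ and $e(L(F)) = g(N,\Delta)$, then $F$ is a tree.
   Context: All graphs are finite and simple; $L(F)$ is the line graph of $F$, $e(\cdot)$ the number of edges, $\Delta(\cdot)$ the maximum degree, $\delta(\cdot)$ the minimum degree. For integers $N \ge \Delta \ge 1$, $g(N,\Delta) = \max\{ e(L(F)) : F \text{ acyclic}, e(F)=N, \Delta(F)=\Delta, \delta(F)\geq 1\}$. *)

theory Defs
  imports Main
begin

definition simple_graph :: "'a set \<Rightarrow> 'a set set \<Rightarrow> bool" where
  "simple_graph V E \<longleftrightarrow> finite V \<and> (\<forall>e\<in>E. e \<subseteq> V \<and> card e = 2)"

definition degree :: "'a set set \<Rightarrow> 'a \<Rightarrow> nat" where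
  "degree E v = card {e\<in>E. v \<in> e}"

definition max_degree :: "'a set \<Rightarrow> 'a set set \<Rightarrow> nat" where
  "max_degree V E = Max (degree E ` V)"

definition no_isolated :: "'a set \<Rightarrow> 'a set set \<Rightarrow> bool" where
  "no_isolated V E \<longleftrightarrow> (\<forall>v\<in>V. degree E v \<ge> 1)"

definition is_cycle :: "'a set set \<Rightarrow> 'a list \<Rightarrow> bool" where
  "is_cycle E vs \<longleftrightarrow> length vs \<ge> 3 \<and> distinct vs \<and>
     (\<forall>i < length vs. {vs ! i, vs ! ((i + 1) mod length vs)} \<in> E)"

definition acyclic_graph :: "'a set \<Rightarrow> 'a set set \<Rightarrow> bool" where
  "acyclic_graph V E \<longleftrightarrow> \<not> (\<exists>vs. set vs \<subseteq> V \<and> is_cycle E vs)"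

definition connected_graph :: "'a set \<Rightarrow> 'a set set \<Rightarrow> bool" where
  "connected_graph V E \<longleftrightarrow> V \<noteq> {} \<and>
     (\<forall>u\<in>V. \<forall>v\<in>V. (u, v) \<in> {(x, y). {x, y} \<in> E}\<^sup>*)"

definition is_tree :: "'a set \<Rightarrow> 'a set set \<Rightarrow> bool" where
  "is_tree V E \<longleftrightarrow> connected_graph V E \<and> acyclic_graph V E"

definition line_graph_edges :: "'a set set \<Rightarrow> 'a set set set" where
  "line_graph_edges E = {{e, f} | e f. e \<in> E \<and> f \<in> E \<and> e \<noteq> f \<and> e \<inter> f \<noteq> {}}"

text \<open>g(N, Delta); vertex sets taken inside nat (every finite graph is isomorphic
  to one on nat).\<close>
definition g :: "nat \<Rightarrow> nat \<Rightarrow> nat" where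
  "g N \<Delta> = Max {card (line_graph_edges E) | (V :: nat set) E.
      simple_graph V E \<and> acyclic_graph V E \<and> no_isolated V E \<and>
      card E = N \<and> max_degree V E = \<Delta>}"

end

theory Submission
  imports Defs
begin

text \<open>If an acyclic graph without isolated vertices is not a tree, it has two components.
  Take a leaf \<open>u\<close> in one and a leaf \<open>w\<close>, with pendant edge \<open>wx\<close>, in the other, and replace
  \<open>wx\<close> by \<open>ux\<close>. The graph stays acyclic without isolated vertices and keeps its number of
  edges; since \<open>\<Delta> \<ge> 2\<close> it also keeps its maximum degree, as \<open>u\<close> now has degree 2 and
  every other remaining vertex keeps its degree. Adjacent edges stay adjacent, and \<open>ux\<close>
  now also meets the edge at \<open>u\<close>, so the line graph gains an edge, contradicting the
  maximality of \<open>e(L(F))\<close>.\<close>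

section \<open>Reachability, paths and leaves\<close>

definition adj :: "'a set set \<Rightarrow> ('a \<times> 'a) set" where
  "adj E = {(x, y). {x, y} \<in> E}"

definition is_path :: "'a set set \<Rightarrow> 'a list \<Rightarrow> bool" where
  "is_path E xs \<longleftrightarrow> distinct xs \<and> (\<forall>i. Suc i < length xs \<longrightarrow> {xs ! i, xs ! Suc i} \<in> E)"

lemma sym_adj: "sym (adj E)"
  unfolding adj_def sym_def by (simp add: insert_commute)

lemma reachable_sym: "(a, b) \<in> (adj E)\<^sup>* \<Longrightarrow> (b, a) \<in> (adj E)\<^sup>*"
  by (meson sym_adj sym_rtrancl symD)

lemma edge_reachable: "{a, b} \<in> E \<Longrightarrow> (a, b) \<in> (adj E)\<^sup>*"
  unfolding adj_def by blast

lemma walk_reachable: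
  assumes "\<And>i. Suc i < length xs \<Longrightarrow> {xs ! i, xs ! Suc i} \<in> E" and "i < length xs"
  shows "(xs ! 0, xs ! i) \<in> (adj E)\<^sup>*"
  using assms(2)
proof (induction i)
  case (Suc i)
  then have "(xs ! 0, xs ! i) \<in> (adj E)\<^sup>*" by simp
  moreover have "(xs ! i, xs ! Suc i) \<in> adj E" using assms(1) Suc.prems unfolding adj_def by simp
  ultimately show ?case by (rule rtrancl_into_rtrancl)
qed simp

lemma simple_graph_finite_edges: "simple_graph V E \<Longrightarrow> finite E"
  unfolding simple_graph_def by (meson Pow_iff finite_Pow_iff finite_subset subsetI)

lemma simple_graph_edgeE:
  assumes "simple_graph V E" "e \<in> E" "v \<in> e"
  obtains y where "e = {v, y}" "y \<noteq> v" "v \<in> V" "y \<in> V"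
proof -
  have "card e = 2" "e \<subseteq> V" using assms unfolding simple_graph_def by auto
  with assms(3) show thesis
    unfolding card_2_iff by (metis that insert_commute insert_iff insert_subset singletonD)
qed

lemma is_path_Cons:
  assumes "is_path E xs" "xs \<noteq> []" "y \<notin> set xs" "{y, hd xs} \<in> E"
  shows "is_path E (y # xs)"
  unfolding is_path_def
proof (intro conjI allI impI)
  show "distinct (y # xs)" using assms(1,3) unfolding is_path_def by simp
  fix i assume "Suc i < length (y # xs)"
  then show "{(y # xs) ! i, (y # xs) ! Suc i} \<in> E"
    using assms(1,2,4) unfolding is_path_def by (cases i) (auto simp: hd_conv_nth)
qed

lemma is_cycle_take:
  assumes "is_path E xs" "2 \<le> j" "j < length xs" "{xs ! j, xs ! 0} \<in> E"
  shows "is_cycle E (take (Suc j) xs)"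
proof -
  have len: "length (take (Suc j) xs) = Suc j" using assms(3) by simp
  show ?thesis
    unfolding is_cycle_def len
  proof (intro conjI allI impI)
    show "3 \<le> Suc j" and "distinct (take (Suc j) xs)"
      using assms(1,2) unfolding is_path_def by auto
    fix i assume "i < Suc j"
    then show "{take (Suc j) xs ! i, take (Suc j) xs ! ((i + 1) mod Suc j)} \<in> E"
      using assms unfolding is_path_def by (cases "i = j") auto
  qed
qed

lemma unextendable_path_start_degree_le_1:
  assumes simple: "simple_graph V E" and acyclic: "acyclic_graph V E"
    and path: "is_path E xs" "set xs \<subseteq> V" "xs \<noteq> []"
    and unextendable: "\<And>y. {xs ! 0, y} \<in> E \<Longrightarrow> y \<in> set xs"
  shows "degree E (xs ! 0) \<le> 1"
proof (rule ccontr)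
  let ?t = "xs ! 0"
  assume "\<not> degree E ?t \<le> 1"
  have "\<not> {e \<in> E. ?t \<in> e} \<subseteq> {{?t, xs ! 1}}"
  proof
    assume "{e \<in> E. ?t \<in> e} \<subseteq> {{?t, xs ! 1}}"
    then have "degree E ?t \<le> card {{?t, xs ! 1}}" unfolding degree_def by (intro card_mono) simp_all
    then show False using \<open>\<not> degree E ?t \<le> 1\<close> by simp
  qed
  then obtain e where e: "e \<in> E" "?t \<in> e" "e \<noteq> {?t, xs ! 1}" by blast
  then obtain y where y: "e = {?t, y}" "y \<noteq> ?t" using simple_graph_edgeE[OF simple] by metis
  then obtain j where j: "j < length xs" "xs ! j = y"
    using unextendable e(1) by (metis in_set_conv_nth)
  have "j \<noteq> 0" "j \<noteq> 1" using j(2) y e(3) by auto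
  then have "2 \<le> j" by linarith
  then have "is_cycle E (take (Suc j) xs)"
    using is_cycle_take[OF path(1)] j y(1) e(1) by (simp add: insert_commute)
  moreover have "set (take (Suc j) xs) \<subseteq> V" using path(2) by (meson order.trans set_take_subset)
  ultimately show False using acyclic unfolding acyclic_graph_def by blast
qed

lemma exists_reachable_leaf:
  assumes simple: "simple_graph V E" and acyclic: "acyclic_graph V E"
    and no_isolated: "no_isolated V E" and "p \<in> V"
  obtains t where "t \<in> V" "degree E t = 1" "(p, t) \<in> (adj E)\<^sup>*"
proof -
  let ?P = "\<lambda>xs. is_path E xs \<and> set xs \<subseteq> V \<and> xs \<noteq> [] \<and> last xs = p"
  have "length xs < Suc (card V)" if "?P xs" for xs
    using that simple card_mono[of V "set xs"] distinct_card[of xs]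
    unfolding is_path_def simple_graph_def by auto
  moreover have "?P [p]" using \<open>p \<in> V\<close> unfolding is_path_def by simp
  ultimately obtain xs where xs: "?P xs" and longest: "\<And>ys. ?P ys \<Longrightarrow> length ys \<le> length xs"
    using Lattices_Big.ex_has_greatest_nat[of ?P "[p]" length] by metis
  let ?t = "xs ! 0"
  have "?t \<in> V" using xs by (auto simp: hd_conv_nth[symmetric])
  have "xs \<noteq> []" "last xs = p" using xs by simp_all
  then have "xs ! (length xs - 1) = p" by (simp add: last_conv_nth)
  then have "(?t, p) \<in> (adj E)\<^sup>*"
    using walk_reachable[of xs E "length xs - 1"] xs unfolding is_path_def by simp
  have "y \<in> set xs" if "{?t, y} \<in> E" for y
  proof (rule ccontr)
    assume "y \<notin> set xs"
    with that have "?P (y # xs)"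
      using is_path_Cons[of E xs y] xs simple_graph_edgeE[OF simple that]
      by (auto simp: hd_conv_nth insert_commute)
    then show False using longest by fastforce
  qed
  then have "degree E ?t \<le> 1"
    using unextendable_path_start_degree_le_1[OF simple acyclic] xs by blast
  moreover have "degree E ?t \<ge> 1" using no_isolated \<open>?t \<in> V\<close> unfolding no_isolated_def by blast
  ultimately show thesis using that \<open>?t \<in> V\<close> reachable_sym[OF \<open>(?t, p) \<in> _\<close>] by simp
qed

section \<open>Cycles\<close>

lemma acyclic_graph_mono:
  "acyclic_graph V E \<Longrightarrow> V' \<subseteq> V \<Longrightarrow> E' \<subseteq> E \<Longrightarrow> acyclic_graph V' E'"
  unfolding acyclic_graph_def is_cycle_def by blast

lemma is_cycle_rotate:
  assumes "is_cycle E vs"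
  shows "is_cycle E (rotate m vs)"
  unfolding is_cycle_def length_rotate distinct_rotate
proof (intro conjI allI impI)
  let ?n = "length vs"
  show "3 \<le> ?n" "distinct vs" using assms unfolding is_cycle_def by simp_all
  fix i assume "i < ?n"
  define k where "k = (m + i) mod ?n"
  have "0 < ?n" using \<open>i < ?n\<close> by linarith
  then have "k < ?n" "(i + 1) mod ?n < ?n" unfolding k_def by simp_all
  moreover have "(m + (i + 1) mod ?n) mod ?n = (k + 1) mod ?n"
    unfolding k_def by (simp add: mod_add_right_eq mod_Suc_eq)
  ultimately show "{rotate m vs ! i, rotate m vs ! ((i + 1) mod ?n)} \<in> E"
    using assms \<open>i < ?n\<close> unfolding is_cycle_def by (simp add: nth_rotate k_def[symmetric])
qed

lemma is_cycle_edge_ne_closing_edge: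
  assumes "is_cycle E vs" "Suc i < length vs"
  shows "{vs ! i, vs ! Suc i} \<noteq> {vs ! (length vs - 1), vs ! 0}"
proof
  let ?n = "length vs"
  assume "{vs ! i, vs ! Suc i} = {vs ! (?n - 1), vs ! 0}"
  then consider "vs ! i = vs ! (?n - 1)" | "vs ! i = vs ! 0" "vs ! Suc i = vs ! (?n - 1)"
    by (auto simp: doubleton_eq_iff)
  moreover have "distinct vs" "3 \<le> ?n" using assms(1) unfolding is_cycle_def by simp_all
  moreover have "i < ?n" "?n - 1 < ?n" "0 < ?n" using assms(2) by linarith+
  ultimately show False
    using assms(2) by cases (simp_all add: nth_eq_iff_index_eq)
qed

text \<open>Rotating a cycle through the new edge \<open>{u, x}\<close> so that it becomes the closing edge
  leaves a walk from one end to the other in the old graph.\<close>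
lemma acyclic_graph_insert_edge:
  assumes acyclic: "acyclic_graph V E" and unreachable: "(u, x) \<notin> (adj E)\<^sup>*"
  shows "acyclic_graph V (insert {u, x} E)"
  unfolding acyclic_graph_def
proof
  assume "\<exists>vs. set vs \<subseteq> V \<and> is_cycle (insert {u, x} E) vs"
  then obtain vs where vs: "set vs \<subseteq> V" "is_cycle (insert {u, x} E) vs" by blast
  let ?n = "length vs"
  have "\<not> is_cycle E vs" using acyclic vs(1) unfolding acyclic_graph_def by blast
  then obtain k where k: "k < ?n" "{vs ! k, vs ! ((k + 1) mod ?n)} = {u, x}"
    using vs(2) unfolding is_cycle_def by auto
  define ws where "ws = rotate (Suc k) vs"
  have ws: "is_cycle (insert {u, x} E) ws" "length ws = ?n"
    unfolding ws_def by (rule is_cycle_rotate[OF vs(2)], simp)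
  have n: "3 \<le> ?n" using vs(2) unfolding is_cycle_def by simp
  have "Suc k + (?n - 1) = k + ?n" using n by simp
  then have "ws ! (?n - 1) = vs ! k"
    using nth_rotate[of "?n - 1" vs "Suc k"] n k(1) unfolding ws_def by simp
  moreover have "0 < ?n" using n by linarith
  then have "ws ! 0 = vs ! ((k + 1) mod ?n)"
    using nth_rotate[of 0 vs "Suc k"] unfolding ws_def by simp
  ultimately have closing: "{ws ! (?n - 1), ws ! 0} = {u, x}" using k(2) by simp
  have "{ws ! i, ws ! Suc i} \<in> E" if "Suc i < length ws" for i
  proof -
    have "{ws ! i, ws ! Suc i} \<in> insert {u, x} E"
      using ws(1) that unfolding is_cycle_def by (metis Suc_eq_plus1 Suc_lessD mod_less)
    moreover have "{ws ! i, ws ! Suc i} \<noteq> {u, x}"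
      using is_cycle_edge_ne_closing_edge[OF ws(1) that] closing ws(2) by simp
    ultimately show ?thesis by simp
  qed
  then have "(ws ! 0, ws ! (?n - 1)) \<in> (adj E)\<^sup>*"
    using walk_reachable[of ws E "?n - 1"] ws(2) n by simp
  then show False
    using closing unreachable reachable_sym by (metis doubleton_eq_iff)
qed

lemma is_cycle_map:
  assumes "is_cycle E vs" "inj_on h (set vs)" "\<And>a b. {a, b} \<in> E \<Longrightarrow> {h a, h b} \<in> E'"
  shows "is_cycle E' (map h vs)"
  unfolding is_cycle_def length_map
proof (intro conjI allI impI)
  show "3 \<le> length vs" "distinct (map h vs)"
    using assms(1,2) unfolding is_cycle_def by (simp_all add: distinct_map)
  fix i assume i: "i < length vs"
  then have "0 < length vs" by linarith
  then have "(i + 1) mod length vs < length vs" by simp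
  then show "{map h vs ! i, map h vs ! ((i + 1) mod length vs)} \<in> E'"
    using assms(1,3) i unfolding is_cycle_def by simp
qed

section \<open>Line graphs\<close>

lemma line_graph_edges_subset_Pow: "line_graph_edges E \<subseteq> Pow E"
  unfolding line_graph_edges_def by auto

lemma card_line_graph_edges_le_pow:
  assumes "finite E"
  shows "card (line_graph_edges E) \<le> 2 ^ card E"
proof -
  have "card (line_graph_edges E) \<le> card (Pow E)"
    using assms by (intro card_mono line_graph_edges_subset_Pow) simp
  then show ?thesis using assms by (simp add: card_Pow)
qed

lemma image_line_graph_edges_subset:
  assumes "inj_on \<sigma> E" and "\<And>a b. a \<in> E \<Longrightarrow> b \<in> E \<Longrightarrow> a \<inter> b \<noteq> {} \<Longrightarrow> \<sigma> a \<inter> \<sigma> b \<noteq> {}"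
  shows "image \<sigma> ` line_graph_edges E \<subseteq> line_graph_edges (\<sigma> ` E)"
proof
  fix p assume "p \<in> image \<sigma> ` line_graph_edges E"
  then obtain a b where ab: "p = \<sigma> ` {a, b}" "a \<in> E" "b \<in> E" "a \<noteq> b" "a \<inter> b \<noteq> {}"
    unfolding line_graph_edges_def by blast
  then have "\<sigma> a \<noteq> \<sigma> b" "\<sigma> a \<inter> \<sigma> b \<noteq> {}" "p = {\<sigma> a, \<sigma> b}"
    using assms by (auto dest: inj_onD)
  with ab(2,3) show "p \<in> line_graph_edges (\<sigma> ` E)"
    unfolding line_graph_edges_def by blast
qed

lemma card_line_graph_edges_le:
  assumes "finite E" and inj: "inj_on \<sigma> E"
    and keep: "\<And>a b. a \<in> E \<Longrightarrow> b \<in> E \<Longrightarrow> a \<inter> b \<noteq> {} \<Longrightarrow> \<sigma> a \<inter> \<sigma> b \<noteq> {}"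
  shows "card (line_graph_edges E) \<le> card (line_graph_edges (\<sigma> ` E))"
proof -
  have "inj_on (image \<sigma>) (line_graph_edges E)"
    using inj_on_subset[OF inj_on_image_Pow[OF inj] line_graph_edges_subset_Pow] .
  then have "card (line_graph_edges E) = card (image \<sigma> ` line_graph_edges E)"
    by (simp add: card_image)
  also have "\<dots> \<le> card (line_graph_edges (\<sigma> ` E))"
    using \<open>finite E\<close> finite_subset[OF line_graph_edges_subset_Pow]
    by (intro card_mono image_line_graph_edges_subset[OF inj keep]) blast
  finally show ?thesis .
qed

lemma card_line_graph_edges_less:
  assumes "finite E" and inj: "inj_on \<sigma> E"
    and keep: "\<And>a b. a \<in> E \<Longrightarrow> b \<in> E \<Longrightarrow> a \<inter> b \<noteq> {} \<Longrightarrow> \<sigma> a \<inter> \<sigma> b \<noteq> {}"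
    and new: "a \<in> E" "b \<in> E" "a \<noteq> b" "a \<inter> b = {}" "\<sigma> a \<inter> \<sigma> b \<noteq> {}"
  shows "card (line_graph_edges E) < card (line_graph_edges (\<sigma> ` E))"
proof -
  have inj_image: "inj_on (image \<sigma>) (line_graph_edges E)"
    using inj_on_subset[OF inj_on_image_Pow[OF inj] line_graph_edges_subset_Pow] .
  have "\<sigma> a \<noteq> \<sigma> b" using new inj by (auto dest: inj_onD)
  then have "{\<sigma> a, \<sigma> b} \<in> line_graph_edges (\<sigma> ` E)"
    using new unfolding line_graph_edges_def by blast
  moreover have "{\<sigma> a, \<sigma> b} \<notin> image \<sigma> ` line_graph_edges E"
  proof
    assume "{\<sigma> a, \<sigma> b} \<in> image \<sigma> ` line_graph_edges E"
    then obtain q where q: "q \<in> line_graph_edges E" "{\<sigma> a, \<sigma> b} = \<sigma> ` q" by blast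
    then obtain c d where cd: "q = {c, d}" "c \<in> E" "d \<in> E" "c \<inter> d \<noteq> {}"
      unfolding line_graph_edges_def by blast
    with q(2) have "{\<sigma> a, \<sigma> b} = {\<sigma> c, \<sigma> d}" by simp
    then have "a = c \<and> b = d \<or> a = d \<and> b = c"
      using new(1,2) cd(2,3) inj_onD[OF inj] unfolding doubleton_eq_iff by metis
    then show False using cd(4) new(4) by (metis Int_commute)
  qed
  ultimately have "image \<sigma> ` line_graph_edges E \<subset> line_graph_edges (\<sigma> ` E)"
    using image_line_graph_edges_subset[OF inj keep] by blast
  moreover have "finite (line_graph_edges (\<sigma> ` E))"
    using \<open>finite E\<close> finite_subset[OF line_graph_edges_subset_Pow] by blast
  ultimately have "card (image \<sigma> ` line_graph_edges E) < card (line_graph_edges (\<sigma> ` E))"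
    by (simp add: psubset_card_mono)
  then show ?thesis by (simp add: card_image[OF inj_image])
qed

section \<open>Relabelling vertices\<close>

lemma simple_graph_image:
  assumes "simple_graph V E" "inj_on f V"
  shows "simple_graph (f ` V) (image f ` E)"
  unfolding simple_graph_def
proof (intro conjI ballI)
  show "finite (f ` V)" using assms(1) unfolding simple_graph_def by simp
  fix e' assume "e' \<in> image f ` E"
  then obtain e where "e \<in> E" "e' = f ` e" by blast
  moreover have "e \<subseteq> V" "card e = 2" using assms(1) \<open>e \<in> E\<close> unfolding simple_graph_def by auto
  ultimately show "e' \<subseteq> f ` V" "card e' = 2"
    using card_image[OF inj_on_subset[OF assms(2)]] by auto
qed

lemma inj_on_image_edges:
  assumes "simple_graph V E" "inj_on f V"
  shows "inj_on (image f) E"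
  using assms inj_on_subset[OF inj_on_image_Pow[OF assms(2)]]
  unfolding simple_graph_def by blast

lemma degree_image:
  assumes "simple_graph V E" "inj_on f V" "v \<in> V"
  shows "degree (image f ` E) (f v) = degree E v"
proof -
  have "f v \<in> f ` e \<longleftrightarrow> v \<in> e" if "e \<in> E" for e
    using assms that inj_on_image_mem_iff[OF assms(2)] unfolding simple_graph_def by blast
  then have "{e' \<in> image f ` E. f v \<in> e'} = image f ` {e \<in> E. v \<in> e}" by auto
  moreover have "inj_on (image f) {e \<in> E. v \<in> e}"
    using inj_on_image_edges[OF assms(1,2)] by (rule inj_on_subset) blast
  ultimately show ?thesis unfolding degree_def by (simp add: card_image)
qed

lemma max_degree_image:
  assumes "simple_graph V E" "inj_on f V"
  shows "max_degree (f ` V) (image f ` E) = max_degree V E"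
proof -
  have "degree (image f ` E) ` f ` V = degree E ` V"
    unfolding image_image using degree_image[OF assms] by (simp cong: image_cong)
  then show ?thesis unfolding max_degree_def by simp
qed

lemma no_isolated_image:
  assumes "simple_graph V E" "inj_on f V" "no_isolated V E"
  shows "no_isolated (f ` V) (image f ` E)"
  using assms(3) degree_image[OF assms(1,2)] unfolding no_isolated_def by simp

lemma acyclic_graph_image:
  assumes simple: "simple_graph V E" and inj: "inj_on f V" and "acyclic_graph V E"
  shows "acyclic_graph (f ` V) (image f ` E)"
  unfolding acyclic_graph_def
proof
  assume "\<exists>vs. set vs \<subseteq> f ` V \<and> is_cycle (image f ` E) vs"
  then obtain vs where vs: "set vs \<subseteq> f ` V" "is_cycle (image f ` E) vs" by blast
  let ?h = "inv_into V f"
  have "{?h a, ?h b} \<in> E" if ab: "{a, b} \<in> image f ` E" for a b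
  proof -
    obtain e where "e \<in> E" "{a, b} = f ` e" using ab by blast
    moreover have "e \<subseteq> V" using simple \<open>e \<in> E\<close> unfolding simple_graph_def by blast
    ultimately have "?h ` {a, b} = e" using inj by simp
    then show ?thesis using \<open>e \<in> E\<close> by simp
  qed
  then have "is_cycle E (map ?h vs)"
    using is_cycle_map[OF vs(2)] inj_on_inv_into[OF vs(1)] by blast
  moreover have "set (map ?h vs) \<subseteq> V" using vs(1) by (auto intro: inv_into_into)
  ultimately show False using assms(3) unfolding acyclic_graph_def by blast
qed

lemma finite_g_candidates:
  "finite {card (line_graph_edges E) | (V :: nat set) E. simple_graph V E \<and> acyclic_graph V E
      \<and> no_isolated V E \<and> card E = N \<and> max_degree V E = D}"
  by (rule finite_subset[of _ "{..2 ^ N}"])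
    (auto dest: simple_graph_finite_edges card_line_graph_edges_le_pow)

text \<open>\<open>g\<close> is a maximum over graphs on \<open>nat\<close>; any graph is first relabelled into \<open>nat\<close>.\<close>
lemma card_line_graph_edges_le_g:
  assumes simple: "simple_graph V E" and "acyclic_graph V E" and "no_isolated V E"
  shows "card (line_graph_edges E) \<le> g (card E) (max_degree V E)"
proof -
  obtain f :: "'a \<Rightarrow> nat" where inj: "inj_on f V"
    using simple finite_imp_inj_to_nat_seg unfolding simple_graph_def by metis
  have inj_edges: "inj_on (image f) E" using inj_on_image_edges[OF simple inj] .
  have "card (line_graph_edges E) \<le> card (line_graph_edges (image f ` E))"
    using simple_graph_finite_edges[OF simple] inj_edges by (rule card_line_graph_edges_le) blast
  also have "\<dots> \<le> g (card E) (max_degree V E)"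
    unfolding g_def
  proof (rule Max_ge[OF finite_g_candidates], intro CollectI exI conjI)
    show "simple_graph (f ` V) (image f ` E)" using simple_graph_image[OF simple inj] .
    show "acyclic_graph (f ` V) (image f ` E)" using acyclic_graph_image[OF simple inj] assms(2) .
    show "no_isolated (f ` V) (image f ` E)" using no_isolated_image[OF simple inj] assms(3) .
    show "card (image f ` E) = card E" using inj_edges by (rule card_image)
    show "max_degree (f ` V) (image f ` E) = max_degree V E" using max_degree_image[OF simple inj] .
  qed (rule refl)
  finally show ?thesis .
qed

lemma degree_le_max_degree: "finite V \<Longrightarrow> v \<in> V \<Longrightarrow> degree E v \<le> max_degree V E"
  unfolding max_degree_def by simp

lemma max_degree_attained:
  assumes "finite V" "V \<noteq> {}"
  obtains v where "v \<in> V" "degree E v = max_degree V E"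
proof -
  have "max_degree V E \<in> degree E ` V" unfolding max_degree_def using assms by (intro Max_in) auto
  then show thesis using that by (metis imageE)
qed

lemma max_degree_eqI:
  assumes "finite V" "v \<in> V" "degree E v = d" "\<And>v. v \<in> V \<Longrightarrow> degree E v \<le> d"
  shows "max_degree V E = d"
  unfolding max_degree_def using assms by (intro Max_eqI) auto

section \<open>Moving a pendant edge\<close>

text \<open>Moving the pendant edge \<open>{w, x}\<close> of the leaf \<open>w\<close> to \<open>{u, x}\<close>, where \<open>u\<close> lies in
  another component, deletes \<open>w\<close> and joins the two components.\<close>
locale leaf_relocation =
  fixes V :: "'a set" and E :: "'a set set" and u w x :: 'a
  assumes simple: "simple_graph V E"
    and leaf_edge: "{w, x} \<in> E" and leaf: "degree E w = 1"
    and u_in_V: "u \<in> V" and u_not_isolated: "degree E u \<ge> 1"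
    and separated: "(u, w) \<notin> (adj E)\<^sup>*"
begin

definition relocate :: "'a set \<Rightarrow> 'a set" where
  "relocate e = (if e = {w, x} then {u, x} else e)"

lemma only_edge_at_leaf:
  assumes "e \<in> E" "w \<in> e"
  shows "e = {w, x}"
proof -
  obtain c where "{e \<in> E. w \<in> e} = {c}" using leaf unfolding degree_def by (rule card_1_singletonE)
  moreover have "{w, x} \<in> {e \<in> E. w \<in> e}" "e \<in> {e \<in> E. w \<in> e}" using leaf_edge assms by auto
  ultimately show ?thesis by (metis singletonD)
qed

lemma leaf_edge_ends: "x \<noteq> w" "x \<in> V" "w \<in> V"
proof -
  have "card {w, x} = 2" "{w, x} \<subseteq> V" using simple leaf_edge unfolding simple_graph_def by auto
  then show "x \<noteq> w" "x \<in> V" "w \<in> V" by auto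
qed

lemma u_x_unreachable: "(u, x) \<notin> (adj E)\<^sup>*"
proof
  assume "(u, x) \<in> (adj E)\<^sup>*"
  moreover have "(x, w) \<in> (adj E)\<^sup>*" using leaf_edge by (simp add: edge_reachable insert_commute)
  ultimately show False using separated by (meson rtrancl_trans)
qed

lemma u_not_on_leaf_edge: "u \<noteq> w" "u \<noteq> x"
  using separated u_x_unreachable by (metis rtrancl.rtrancl_refl)+

lemma new_edge_notin: "{u, x} \<notin> E"
  using u_x_unreachable edge_reachable by metis

lemma inj_on_relocate: "inj_on relocate E"
proof (rule inj_onI)
  fix a b assume "a \<in> E" "b \<in> E" "relocate a = relocate b"
  then show "a = b"
    using new_edge_notin unfolding relocate_def by (cases "a = {w, x}"; cases "b = {w, x}") auto
qed

lemma relocate_image: "relocate ` E = insert {u, x} (E - {{w, x}})"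
  using leaf_edge unfolding relocate_def by auto

lemma simple_graph_relocate: "simple_graph (V - {w}) (relocate ` E)"
  unfolding simple_graph_def relocate_image
proof (intro conjI ballI)
  show "finite (V - {w})" using simple unfolding simple_graph_def by simp
  fix e assume "e \<in> insert {u, x} (E - {{w, x}})"
  then consider "e = {u, x}" | "e \<in> E" "w \<notin> e"
    using only_edge_at_leaf by blast
  then have "e \<subseteq> V - {w} \<and> card e = 2"
  proof cases
    case 1
    then show ?thesis using leaf_edge_ends u_in_V u_not_on_leaf_edge by auto
  next
    case 2
    then show ?thesis using simple unfolding simple_graph_def by auto
  qed
  then show "e \<subseteq> V - {w}" "card e = 2" by simp_all
qed

lemma card_relocate: "card (relocate ` E) = card E"
  using inj_on_relocate by (rule card_image)

lemma degree_relocate: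
  assumes "v \<noteq> u" "v \<noteq> w"
  shows "degree (relocate ` E) v = degree E v"
proof -
  have "v \<in> relocate e \<longleftrightarrow> v \<in> e" for e
    using assms unfolding relocate_def by auto
  then have "{e \<in> relocate ` E. v \<in> e} = relocate ` {e \<in> E. v \<in> e}" by blast
  moreover have "inj_on relocate {e \<in> E. v \<in> e}"
    using inj_on_relocate by (rule inj_on_subset) blast
  ultimately show ?thesis unfolding degree_def by (simp add: card_image)
qed

lemma degree_relocate_u: "degree (relocate ` E) u = Suc (degree E u)"
proof -
  have "{e \<in> relocate ` E. u \<in> e} = insert {u, x} {e \<in> E. u \<in> e}"
    using u_not_on_leaf_edge unfolding relocate_image by auto
  moreover have "finite {e \<in> E. u \<in> e}" using simple_graph_finite_edges[OF simple] by simp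
  ultimately show ?thesis using new_edge_notin unfolding degree_def by simp
qed

lemma no_isolated_relocate:
  assumes "no_isolated V E"
  shows "no_isolated (V - {w}) (relocate ` E)"
  unfolding no_isolated_def
proof
  fix v assume v: "v \<in> V - {w}"
  show "degree (relocate ` E) v \<ge> 1"
  proof (cases "v = u")
    case False
    then have "degree (relocate ` E) v = degree E v" using v degree_relocate by simp
    then show ?thesis using assms v unfolding no_isolated_def by simp
  qed (simp add: degree_relocate_u)
qed

lemma max_degree_relocate:
  assumes "degree E u < max_degree V E"
  shows "max_degree (V - {w}) (relocate ` E) = max_degree V E"
proof -
  have "finite V" using simple unfolding simple_graph_def by simp
  moreover have "V \<noteq> {}" using u_in_V by blast
  ultimately obtain v where v: "v \<in> V" "degree E v = max_degree V E"
    by (rule max_degree_attained)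
  have "v \<noteq> u" using v(2) assms by auto
  moreover have "v \<noteq> w" using v(2) assms leaf u_not_isolated by auto
  show ?thesis
  proof (rule max_degree_eqI[where v = v])
    show "finite (V - {w})" using \<open>finite V\<close> by simp
    show "v \<in> V - {w}" using v(1) \<open>v \<noteq> w\<close> by simp
    show "degree (relocate ` E) v = max_degree V E"
      using v(2) degree_relocate[OF \<open>v \<noteq> u\<close> \<open>v \<noteq> w\<close>] by simp
    fix v' assume v': "v' \<in> V - {w}"
    show "degree (relocate ` E) v' \<le> max_degree V E"
    proof (cases "v' = u")
      case True
      then show ?thesis using assms degree_relocate_u by simp
    next
      case False
      then have "degree (relocate ` E) v' = degree E v'" using v' degree_relocate by simp
      then show ?thesis using v' degree_le_max_degree[OF \<open>finite V\<close>] by simp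
    qed
  qed
qed

lemma acyclic_graph_relocate:
  assumes "acyclic_graph V E"
  shows "acyclic_graph (V - {w}) (relocate ` E)"
proof -
  have "relocate ` E \<subseteq> insert {u, x} E" unfolding relocate_image by blast
  with acyclic_graph_insert_edge[OF assms u_x_unreachable] show ?thesis
    by (rule acyclic_graph_mono[OF _ Diff_subset])
qed

text \<open>Intersecting edges keep intersecting, since the only edges meeting \<open>{w, x}\<close> meet it
  in \<open>x\<close>; and \<open>{u, x}\<close> now meets the edge at \<open>u\<close>, which \<open>{w, x}\<close> did not.\<close>
lemma card_line_graph_edges_relocate:
  "card (line_graph_edges E) < card (line_graph_edges (relocate ` E))"
proof -
  have "{e \<in> E. u \<in> e} \<noteq> {}"
    using u_not_isolated unfolding degree_def by (metis card.empty not_one_le_zero)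
  then obtain e where e: "e \<in> E" "u \<in> e" by blast
  obtain y where "e = {u, y}" using simple_graph_edgeE[OF simple e] by metis
  then have "x \<notin> e" using new_edge_notin e(1) u_not_on_leaf_edge by auto
  moreover have "w \<notin> e" using only_edge_at_leaf e u_not_on_leaf_edge by blast
  ultimately have disjoint: "{w, x} \<inter> e = {}" by blast
  have "e \<noteq> {w, x}" using e(2) u_not_on_leaf_edge by blast
  have meets_at_x: "x \<in> c" if "c \<in> E" "c \<noteq> {w, x}" "{w, x} \<inter> c \<noteq> {}" for c
    using that only_edge_at_leaf by blast
  have keep: "relocate a \<inter> relocate b \<noteq> {}" if ab: "a \<in> E" "b \<in> E" "a \<inter> b \<noteq> {}" for a b
  proof (cases "a = {w, x}"; cases "b = {w, x}")
    assume "a = {w, x}" "b \<noteq> {w, x}"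
    then show ?thesis using meets_at_x[of b] ab unfolding relocate_def by auto
  next
    assume "a \<noteq> {w, x}" "b = {w, x}"
    then show ?thesis using meets_at_x[of a] ab unfolding relocate_def by (auto simp: Int_commute)
  qed (use ab in \<open>simp_all add: relocate_def\<close>)
  have "relocate {w, x} \<inter> relocate e \<noteq> {}"
    using e \<open>e \<noteq> {w, x}\<close> unfolding relocate_def by auto
  with \<open>e \<noteq> {w, x}\<close> disjoint show ?thesis
    using card_line_graph_edges_less[OF simple_graph_finite_edges[OF simple] inj_on_relocate keep
        leaf_edge e(1)] by simp
qed

end

lemma disconnected_forest_larger_line_graph:
  fixes V :: "'a set" and E :: "'a set set"
  assumes simple: "simple_graph V E" and acyclic: "acyclic_graph V E"
    and no_isolated: "no_isolated V E" and "V \<noteq> {}" and "\<not> connected_graph V E"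
    and "2 \<le> max_degree V E"
  obtains V' :: "'a set" and E' where "simple_graph V' E'" "acyclic_graph V' E'" "no_isolated V' E'"
    "card E' = card E" "max_degree V' E' = max_degree V E"
    "card (line_graph_edges E) < card (line_graph_edges E')"
proof -
  obtain p q where "p \<in> V" "q \<in> V" and pq: "(p, q) \<notin> (adj E)\<^sup>*"
    using assms(4,5) unfolding connected_graph_def adj_def by blast
  obtain u where u: "u \<in> V" "degree E u = 1" "(p, u) \<in> (adj E)\<^sup>*"
    using exists_reachable_leaf[OF simple acyclic no_isolated \<open>p \<in> V\<close>] .
  obtain w where w: "degree E w = 1" "(q, w) \<in> (adj E)\<^sup>*"
    using exists_reachable_leaf[OF simple acyclic no_isolated \<open>q \<in> V\<close>] .
  have separated: "(u, w) \<notin> (adj E)\<^sup>*"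
    using pq u(3) reachable_sym[OF w(2)] by (meson rtrancl_trans)
  have "{e \<in> E. w \<in> e} \<noteq> {}" using w(1) unfolding degree_def by (metis card.empty zero_neq_one)
  then obtain e where "e \<in> E" "w \<in> e" by blast
  then obtain x where "{w, x} \<in> E" using simple_graph_edgeE[OF simple] by metis
  with simple w(1) u separated have "leaf_relocation V E u w x"
    unfolding leaf_relocation_def by simp
  then interpret leaf_relocation V E u w x .
  show thesis
  proof (rule that[of "V - {w}" "relocate ` E"])
    show "simple_graph (V - {w}) (relocate ` E)" by (rule simple_graph_relocate)
    show "acyclic_graph (V - {w}) (relocate ` E)" using acyclic by (rule acyclic_graph_relocate)
    show "no_isolated (V - {w}) (relocate ` E)" using no_isolated by (rule no_isolated_relocate)
    show "card (relocate ` E) = card E" by (rule card_relocate)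
    show "max_degree (V - {w}) (relocate ` E) = max_degree V E"
      using u(2) assms(6) by (intro max_degree_relocate) simp
    show "card (line_graph_edges E) < card (line_graph_edges (relocate ` E))"
      by (rule card_line_graph_edges_relocate)
  qed
qed

theorem mainTheorem6:
  fixes N \<Delta> :: nat and V :: "'a set" and E :: "'a set set"
  assumes "N \<ge> \<Delta>" and "\<Delta> \<ge> 2"
    and "simple_graph V E" and "acyclic_graph V E" and "no_isolated V E"
    and "card E = N" and "max_degree V E = \<Delta>"
    and "card (line_graph_edges E) = g N \<Delta>"
  shows "is_tree V E"
proof -
  have "E \<noteq> {}" using assms(1,2,6) by auto
  then have "V \<noteq> {}"
    using assms(3) unfolding simple_graph_def by (metis all_not_in_conv card.empty subset_empty zero_neq_numeral)
  have "connected_graph V E"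
  proof (rule ccontr)
    assume "\<not> connected_graph V E"
    then obtain V' :: "'a set" and E' where "simple_graph V' E'" "acyclic_graph V' E'" "no_isolated V' E'"
      and "card E' = N" "max_degree V' E' = \<Delta>"
      and larger: "g N \<Delta> < card (line_graph_edges E')"
      using disconnected_forest_larger_line_graph[OF assms(3-5) \<open>V \<noteq> {}\<close>] assms(2,6-8)
      by metis
    then have "card (line_graph_edges E') \<le> g N \<Delta>"
      using card_line_graph_edges_le_g by metis
    with larger show False by simp
  qed
  with assms(4) show ?thesis unfolding is_tree_def by simp
qed

end
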